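(* Let $k,\ell$ be positive integers. Then, as formal power series in $t$, \[ \sum_{c\ge0}\big(\operatorname{re}_k(\ell,c)-\operatorname{ro}_k(\ell,c)\big)\frac{t^{c}}{c!}=\exp\Big(\sum_{g\in G_k(\ell)}(-1)^{\ell g+1}\frac{\ell^{g-1}}{g}t^{g}\Big). \]
   Context: $G_k(\ell)=\{g\in\mathbb N:\gcd(g\ell,k)=g\}$. A permutation of cycle type $(\ell)^c$ is a permutation of an $\ell c$-element set whose disjoint cycle decomposition consists of exactly $c$ cycles, all of length $\ell$ (for $c=0$ it is the empty permutation). $\operatorname{re}_k(\ell,c)$ (resp. $\operatorname{ro}_k(\ell,c)$) denotes the number of even (resp. odd) permutations $\tau$ of the same $\ell c$-element set with $\tau^k=\sigma$, where $\sigma$ is any fixed permutation of cycle type $(\ell)^c$ (this number does not depend on the choice of $\sigma$). *)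

theory Defs
  imports "HOL-Combinatorics.Combinatorics" "HOL-Computational_Algebra.Formal_Power_Series"
begin

definition G_set :: "nat \<Rightarrow> nat \<Rightarrow> nat set" where
  "G_set k l = {g. gcd (g * l) k = g}"

definition has_cycle_type :: "nat \<Rightarrow> nat \<Rightarrow> 'a set \<Rightarrow> ('a \<Rightarrow> 'a) \<Rightarrow> bool" where
  "has_cycle_type l c S \<sigma> \<longleftrightarrow> \<sigma> permutes S \<and> finite S \<and> card S = l * c \<and>
     (\<forall>x\<in>S. card (orbit \<sigma> x) = l)"

definition re_roots :: "nat \<Rightarrow> 'a set \<Rightarrow> ('a \<Rightarrow> 'a) \<Rightarrow> nat" where
  "re_roots k S \<sigma> = card {\<tau>. \<tau> permutes S \<and> \<tau> ^^ k = \<sigma> \<and> evenperm \<tau>}"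

definition ro_roots :: "nat \<Rightarrow> 'a set \<Rightarrow> ('a \<Rightarrow> 'a) \<Rightarrow> nat" where
  "ro_roots k S \<sigma> = card {\<tau>. \<tau> permutes S \<and> \<tau> ^^ k = \<sigma> \<and> \<not> evenperm \<tau>}"

end

theory Submission
  imports Defs
begin

text \<open>
  Fix a point x0 of S. For a k-th root \<tau> of \<sigma> let g be least such that \<tau>^g x0 lies in the
  \<sigma>-orbit of x0. The \<sigma>-orbits of x0, \<tau> x0, ..., \<tau>^(g-1) x0 are distinct, their union C is a
  single \<tau>-cycle of length l g, g lies in G_k(l), and \<tau> on C is determined by the list
  x0, \<tau> x0, ..., \<tau>^(g-1) x0. Conversely every list of points with pairwise distinct \<sigma>-orbits
  starting at x0 whose length lies in G_k(l) arises in this way. Hence the roots \<tau> correspond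
  bijectively to such lists together with a k-th root of \<sigma> restricted to S - C. There are
  l^(g-1) (c-1)!/(c-g)! lists of length g and the cycle has sign (-1)^(l g - 1), so the signed
  counts a_c satisfy c a_c/c! = \<Sum>_{g \<in> G_k(l)} (-1)^(l g + 1) l^(g-1) a_(c-g)/(c-g)!,
  which is the coefficient recursion of exp F for the series F in the exponent.
\<close>

unbundle fps_syntax

lemma sign_cycle_of_list:
  "distinct cs \<Longrightarrow> sign (cycle_of_list cs) = (-1) ^ (length cs - 1)"
proof (induction cs rule: cycle_of_list.induct)
  case (1 i j cs)
  have "sign (cycle_of_list (i # j # cs)) = sign (transpose i j) * sign (cycle_of_list (j # cs))"
    unfolding cycle_of_list.simps(1) by (rule sign_compose[OF permutation_swap_id permutation_of_cycle])
  also have "\<dots> = (-1)^(length (i#j#cs) - 1)" using 1 by (simp add: sign_swap_id)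
  finally show ?case .
qed (auto simp: sign_id)

lemma cycle_of_list_funpow_nth:
  assumes "distinct cs" "i < length cs"
  shows "(cycle_of_list cs ^^ n) (cs ! i) = cs ! ((i + n) mod length cs)"
proof -
  have "map (cycle_of_list cs ^^ n) cs ! i = rotate n cs ! i"
    using cyclic_rotation[OF assms(1)] by simp
  then show ?thesis using assms(2) by (simp add: nth_rotate add.commute)
qed

lemma comp_funpow_commute:
  assumes "f \<circ> g = g \<circ> f"
  shows "f \<circ> g ^^ n = g ^^ n \<circ> f"
proof (induction n)
  case (Suc n)
  have "f \<circ> g ^^ Suc n = (f \<circ> g) \<circ> g ^^ n" by (simp only: funpow.simps(2) comp_assoc)
  also have "\<dots> = g \<circ> (f \<circ> g ^^ n)" by (simp only: assms comp_assoc)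
  also have "\<dots> = g ^^ Suc n \<circ> f" by (simp only: Suc.IH funpow.simps(2) comp_assoc)
  finally show ?case .
qed simp

lemma funpow_commute:
  assumes "f \<circ> g = g \<circ> f"
  shows "f ^^ m \<circ> g ^^ n = g ^^ n \<circ> f ^^ m"
proof -
  have "f ^^ m \<circ> g = g \<circ> f ^^ m" using comp_funpow_commute[OF assms[symmetric]] by simp
  then show ?thesis by (rule comp_funpow_commute)
qed

lemma funpow_comp_commute:
  assumes "f \<circ> g = g \<circ> f"
  shows "(f \<circ> g) ^^ n = f ^^ n \<circ> g ^^ n"
proof (induction n)
  case (Suc n)
  have "(f \<circ> g) ^^ Suc n = f \<circ> (g \<circ> f ^^ n) \<circ> g ^^ n"
    by (simp only: funpow.simps(2) Suc.IH comp_assoc)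
  also have "\<dots> = f ^^ Suc n \<circ> g ^^ Suc n"
    by (simp only: comp_funpow_commute[OF assms[symmetric]] funpow.simps(2) comp_assoc)
  finally show ?case .
qed simp

lemma perm_restrict_diff_invariant:
  assumes "f permutes S" "A \<subseteq> S" "f ` A = A"
  shows "perm_restrict f (S - A) permutes (S - A)"
    and "\<And>z n. z \<in> S - A \<Longrightarrow> (perm_restrict f (S - A) ^^ n) z = (f ^^ n) z"
    and "\<And>z. z \<in> S - A \<Longrightarrow> f z \<in> S - A"
proof -
  have inj: "inj f" using assms(1) permutes_inj by blast
  have "f ` (S - A) = f ` S - f ` A" using inj by (simp add: image_set_diff)
  then have im: "f ` (S - A) = S - A" using assms permutes_image by metis
  then show maps_to: "\<And>z. z \<in> S - A \<Longrightarrow> f z \<in> S - A" by blast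
  show "perm_restrict f (S - A) permutes (S - A)"
  proof (rule bij_imp_permutes)
    have "bij_betw f (S - A) (S - A)"
      unfolding bij_betw_def using im inj_on_subset[OF inj, of "S - A"] by simp
    then show "bij_betw (perm_restrict f (S - A)) (S - A) (S - A)"
      by (rule bij_betw_cong[THEN iffD1, rotated]) (simp add: perm_restrict_def)
  qed (auto simp: perm_restrict_def)
  fix z n assume "z \<in> S - A"
  then show "(perm_restrict f (S - A) ^^ n) z = (f ^^ n) z"
  proof (induction n)
    case (Suc n)
    have "(f ^^ n) z \<in> S - A" using Suc.prems maps_to by (induction n) auto
    then show ?case using Suc by (simp add: perm_restrict_def)
  qed simp
qed

lemma card_orbit_eq_funpow_dist1:
  assumes "x \<in> orbit f x"
  shows "card (orbit f x) = funpow_dist1 f x x"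
  using orbit_conv_funpow_dist1[OF assms] card_image[OF inj_on_funpow_dist1[OF assms]] by simp

lemma permutation_orbit_eq:
  assumes "permutation f" "z \<in> orbit f x"
  shows "orbit f z = orbit f x"
  using orbit_cyclic_eq3[OF cyclic_on_orbit'[OF assms(1)] assms(2)] .

lemma permutation_orbit_funpow:
  assumes "permutation f"
  shows "orbit f ((f ^^ n) x) = orbit f x"
  using permutation_orbit_eq[OF assms funpow_in_orbit[OF permutation_self_in_orbit[OF assms]]] .

lemma permutation_orbits_disjoint:
  assumes "permutation f" "orbit f x \<noteq> orbit f y"
  shows "orbit f x \<inter> orbit f y = {}"
  using permutation_orbit_eq[OF assms(1)] assms(2) by blast

lemma G_set_iff:
  assumes "k > 0"
  shows "g \<in> G_set k l \<longleftrightarrow> g > 0 \<and> g dvd k \<and> coprime (k div g) l"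
proof
  assume "g \<in> G_set k l"
  then have e: "gcd (g * l) k = g" unfolding G_set_def by simp
  have "g > 0" using e assms by (cases g) auto
  moreover have "g dvd k" using e by (metis gcd_dvd2)
  moreover obtain k' where k': "k = g * k'" using \<open>g dvd k\<close> by blast
  moreover have "gcd (g * l) (g * k') = g * gcd l k'" by (simp add: gcd_mult_distrib_nat)
  ultimately show "g > 0 \<and> g dvd k \<and> coprime (k div g) l"
    using e by (simp add: coprime_iff_gcd_eq_1 gcd.commute)
next
  assume "g > 0 \<and> g dvd k \<and> coprime (k div g) l"
  then obtain k' where "k = g * k'" "coprime k' l" by auto
  then have "gcd (g * l) k = g"
    using gcd_mult_distrib_nat[of g l k'] by (simp add: coprime_iff_gcd_eq_1 gcd.commute)
  then show "g \<in> G_set k l" unfolding G_set_def by simp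
qed

lemma coprime_if_mod_inverse:
  fixes a v l :: nat
  assumes "(a * v) mod l = 1 mod l"
  shows "coprime a l"
proof (rule coprimeI)
  fix d assume "d dvd a" "d dvd l"
  then have "d dvd (a * v) mod l" by (simp add: dvd_mod)
  then have "d dvd 1 mod l" using assms by simp
  then show "is_unit d" using \<open>d dvd l\<close> by (metis dvd_mod_iff mod_mod_trivial)
qed

lemma mod_inverse_unique:
  fixes q u v l :: nat
  assumes "(q * u) mod l = 1 mod l" "(q * v) mod l = 1 mod l"
  shows "u mod l = v mod l"
proof -
  have "(u * (q * v)) mod l = u mod l" using assms(2) by (metis mod_mult_right_eq mult.right_neutral)
  moreover have "((q * u) * v) mod l = v mod l" using assms(1) by (metis mod_mult_left_eq mult_1)
  ultimately show ?thesis by (simp add: algebra_simps)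
qed

definition quot_inverse :: "nat \<Rightarrow> nat \<Rightarrow> nat \<Rightarrow> nat" where
  "quot_inverse k l g = (SOME u. (k div g * u) mod l = 1 mod l)"

lemma quot_inverse_mod:
  assumes "g \<in> G_set k l" "k > 0"
  shows "(k div g * quot_inverse k l g) mod l = 1 mod l"
proof -
  have g: "g > 0" "g dvd k" and cp: "coprime (k div g) l" using assms G_set_iff by auto
  have "k div g \<noteq> 0" using g assms(2) by (auto elim!: dvdE)
  then obtain x y where "k div g * x = l * y + gcd (k div g) l" using bezout_nat by blast
  then have "(k div g * x) mod l = (1 + l * y) mod l" using cp by simp
  also have "\<dots> = 1 mod l" by (rule mod_mult_self2)
  finally have "(k div g * x) mod l = 1 mod l" .
  then show ?thesis unfolding quot_inverse_def by (rule someI)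
qed

definition root_exponent :: "nat \<Rightarrow> nat \<Rightarrow> real fps" where
  "root_exponent k l = Abs_fps (\<lambda>g. if g \<in> G_set k l
                          then (-1) ^ (l * g + 1) * of_nat l ^ (g - 1) / of_nat g else 0)"

lemma of_nat_mult_root_exponent_nth:
  "0 < g \<Longrightarrow> of_nat g * root_exponent k l $ g
     = (if g \<in> G_set k l then (-1) ^ (l * g + 1) * of_nat l ^ (g - 1) else 0)"
  unfolding root_exponent_def by simp

lemma root_exponent_nth_0: "k > 0 \<Longrightarrow> root_exponent k l $ 0 = 0"
  unfolding root_exponent_def G_set_def by simp

lemma fps_exp_compose_nth_Suc:
  fixes F :: "'a::field_char_0 fps"
  assumes "F $ 0 = 0"
  shows "of_nat (Suc n) * (fps_exp 1 oo F) $ Suc n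
       = (\<Sum>g=1..Suc n. of_nat g * F $ g * (fps_exp 1 oo F) $ (Suc n - g))"
proof -
  define E where "E = fps_exp 1 oo F"
  have deriv: "fps_deriv E = E * fps_deriv F"
    unfolding E_def using fps_compose_deriv[OF assms, of "fps_exp 1"] by (simp add: mult.commute)
  have "of_nat (Suc n) * E $ Suc n = (\<Sum>i=0..n. E $ i * (of_nat (n - i + 1) * F $ (n - i + 1)))"
    using arg_cong[OF deriv, of "\<lambda>A. A $ n"] unfolding fps_mult_nth by simp
  also have "\<dots> = (\<Sum>i=0..n. E $ i * (of_nat (Suc n - i) * F $ (Suc n - i)))"
    by (intro sum.cong refl) (simp add: Suc_diff_le)
  also have "\<dots> = (\<Sum>g=1..Suc n. of_nat g * F $ g * E $ (Suc n - g))"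
    by (rule sum.reindex_bij_witness[where i="\<lambda>g. Suc n - g" and j="\<lambda>i. Suc n - i"]) auto
  finally show ?thesis unfolding E_def .
qed

definition uniform_cycles :: "nat \<Rightarrow> 'a set \<Rightarrow> ('a \<Rightarrow> 'a) \<Rightarrow> bool" where
  "uniform_cycles l S \<sigma> \<longleftrightarrow> \<sigma> permutes S \<and> finite S \<and> (\<forall>x\<in>S. card (orbit \<sigma> x) = l)"

lemma has_cycle_type_iff: "has_cycle_type l c S \<sigma> \<longleftrightarrow> uniform_cycles l S \<sigma> \<and> card S = l * c"
  unfolding has_cycle_type_def uniform_cycles_def by auto

lemma uniform_cycles_permutation: "uniform_cycles l S \<sigma> \<Longrightarrow> permutation \<sigma>"
  unfolding uniform_cycles_def permutation_permutes by blast

lemma uniform_cycles_funpow_dist1: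
  assumes "uniform_cycles l S \<sigma>" "x \<in> S"
  shows "funpow_dist1 \<sigma> x x = l"
  using card_orbit_eq_funpow_dist1[OF permutation_self_in_orbit[OF uniform_cycles_permutation]]
    assms unfolding uniform_cycles_def by metis

lemma uniform_cycles_funpow_eq_iff:
  assumes "uniform_cycles l S \<sigma>" "x \<in> S" "l > 0"
  shows "(\<sigma> ^^ a) x = (\<sigma> ^^ b) x \<longleftrightarrow> a mod l = b mod l"
proof -
  note x_in = permutation_self_in_orbit[OF uniform_cycles_permutation[OF assms(1)]]
  note dist = uniform_cycles_funpow_dist1[OF assms(1,2)]
  have "(\<sigma> ^^ l) x = x" using funpow_dist1_prop[OF x_in[of x]] by (simp only: dist)
  then have "(\<sigma> ^^ n) x = (\<sigma> ^^ (n mod l)) x" for n by (simp add: funpow_mod_eq)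
  moreover have "(\<sigma> ^^ (a mod l)) x = (\<sigma> ^^ (b mod l)) x \<longleftrightarrow> a mod l = b mod l"
    using funpow_neq_less_funpow_dist1[OF x_in[of x], of "a mod l" "b mod l"] dist assms(3) by auto
  ultimately show ?thesis by metis
qed

lemma uniform_cycles_restrict:
  assumes "uniform_cycles l S \<sigma>" "A \<subseteq> S" "\<sigma> ` A = A"
  shows "uniform_cycles l (S - A) (perm_restrict \<sigma> (S - A))"
proof -
  have perm: "\<sigma> permutes S" and fin: "finite S" using assms(1) unfolding uniform_cycles_def by auto
  note restrict = perm_restrict_diff_invariant[OF perm assms(2,3)]
  have "orbit (perm_restrict \<sigma> (S - A)) x = orbit \<sigma> x" if "x \<in> S - A" for x
  proof (rule orbit_cong0[OF that])
    show "perm_restrict \<sigma> (S - A) \<in> S - A \<rightarrow> S - A"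
      using restrict(3) unfolding perm_restrict_def by (intro funcsetI) simp
  qed (simp add: perm_restrict_def)
  then show ?thesis using assms(1) restrict(1) fin unfolding uniform_cycles_def by simp
qed

section \<open>Orbit transversals and the cycle they determine\<close>

definition orbit_union :: "('a \<Rightarrow> 'a) \<Rightarrow> 'a list \<Rightarrow> 'a set" where
  "orbit_union \<sigma> ys = (\<Union>y\<in>set ys. orbit \<sigma> y)"

definition orbit_transversals :: "'a set \<Rightarrow> ('a \<Rightarrow> 'a) \<Rightarrow> 'a \<Rightarrow> 'a list set" where
  "orbit_transversals S \<sigma> x0 =
     {ys. ys \<noteq> [] \<and> hd ys = x0 \<and> set ys \<subseteq> S \<and> distinct (map (orbit \<sigma>) ys)}"

text \<open>
  With g = length ys and u an inverse of k/g modulo l, position q g + r of the cycle carries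
  \<sigma>^(q u) (ys ! r). Advancing k positions raises q by k/g, i.e. applies \<sigma>^((k/g) u) = \<sigma>, so the
  k-th power of the cycle is \<sigma> on the orbit union.
\<close>
definition cycle_point :: "nat \<Rightarrow> nat \<Rightarrow> ('a \<Rightarrow> 'a) \<Rightarrow> 'a list \<Rightarrow> nat \<Rightarrow> 'a" where
  "cycle_point k l \<sigma> ys i =
     (\<sigma> ^^ ((i div length ys) * quot_inverse k l (length ys) mod l)) (ys ! (i mod length ys))"

definition root_cycle_list :: "nat \<Rightarrow> nat \<Rightarrow> ('a \<Rightarrow> 'a) \<Rightarrow> 'a list \<Rightarrow> 'a list" where
  "root_cycle_list k l \<sigma> ys = map (cycle_point k l \<sigma> ys) [0..<l * length ys]"

definition root_cycle :: "nat \<Rightarrow> nat \<Rightarrow> ('a \<Rightarrow> 'a) \<Rightarrow> 'a list \<Rightarrow> 'a \<Rightarrow> 'a" where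
  "root_cycle k l \<sigma> ys = cycle_of_list (root_cycle_list k l \<sigma> ys)"

definition perm_roots :: "nat \<Rightarrow> 'a set \<Rightarrow> ('a \<Rightarrow> 'a) \<Rightarrow> ('a \<Rightarrow> 'a) set" where
  "perm_roots k S \<sigma> = {\<tau>. \<tau> permutes S \<and> \<tau> ^^ k = \<sigma>}"

definition first_return :: "('a \<Rightarrow> 'a) \<Rightarrow> 'a \<Rightarrow> ('a \<Rightarrow> 'a) \<Rightarrow> nat" where
  "first_return \<sigma> x0 \<tau> = (LEAST g. 0 < g \<and> (\<tau> ^^ g) x0 \<in> orbit \<sigma> x0)"

definition return_trace :: "('a \<Rightarrow> 'a) \<Rightarrow> 'a \<Rightarrow> ('a \<Rightarrow> 'a) \<Rightarrow> 'a list" where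
  "return_trace \<sigma> x0 \<tau> = map (\<lambda>r. (\<tau> ^^ r) x0) [0..<first_return \<sigma> x0 \<tau>]"

lemma orbit_transversalsD:
  assumes "ys \<in> orbit_transversals S \<sigma> x0"
  shows "distinct ys" "set ys \<subseteq> S" "ys ! 0 = x0" "length ys > 0"
    "\<And>i j. i < length ys \<Longrightarrow> j < length ys \<Longrightarrow> orbit \<sigma> (ys ! i) = orbit \<sigma> (ys ! j) \<Longrightarrow> i = j"
proof -
  have d: "distinct (map (orbit \<sigma>) ys)" and ne: "ys \<noteq> []" and h: "hd ys = x0"
    and s: "set ys \<subseteq> S"
    using assms unfolding orbit_transversals_def by auto
  show "distinct ys" using d by (simp add: distinct_map)
  show "set ys \<subseteq> S" by fact
  show "ys ! 0 = x0" using ne h by (simp add: hd_conv_nth)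
  show "length ys > 0" using ne by simp
  fix i j assume "i < length ys" "j < length ys" "orbit \<sigma> (ys ! i) = orbit \<sigma> (ys ! j)"
  then show "i = j" using d[unfolded distinct_conv_nth] by (metis length_map nth_map)
qed

lemma in_orbit_union_iff:
  assumes "permutation \<sigma>"
  shows "z \<in> orbit_union \<sigma> ys \<longleftrightarrow> orbit \<sigma> z \<in> orbit \<sigma> ` set ys"
  unfolding orbit_union_def
  using permutation_orbit_eq[OF assms] permutation_self_in_orbit[OF assms] by blast

lemma orbit_union_funpow_iff:
  assumes "permutation \<sigma>"
  shows "(\<sigma> ^^ n) z \<in> orbit_union \<sigma> ys \<longleftrightarrow> z \<in> orbit_union \<sigma> ys"
  using in_orbit_union_iff[OF assms] permutation_orbit_funpow[OF assms] by simp

lemma permutation_image_orbit_union: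
  assumes "permutation \<sigma>"
  shows "\<sigma> ` orbit_union \<sigma> ys = orbit_union \<sigma> ys"
proof
  show "\<sigma> ` orbit_union \<sigma> ys \<subseteq> orbit_union \<sigma> ys"
    using orbit_union_funpow_iff[OF assms, of 1] by auto
  show "orbit_union \<sigma> ys \<subseteq> \<sigma> ` orbit_union \<sigma> ys"
  proof
    fix z assume z: "z \<in> orbit_union \<sigma> ys"
    obtain w where w: "z = \<sigma> w"
      using bij_is_surj[OF permutation_bijective[OF assms]] by (metis surj_def)
    then have "w \<in> orbit_union \<sigma> ys" using z orbit_union_funpow_iff[OF assms, of 1 w] by simp
    then show "z \<in> \<sigma> ` orbit_union \<sigma> ys" using w by blast
  qed
qed

locale root_setup =
  fixes k l :: nat and S :: "'a set" and \<sigma> :: "'a \<Rightarrow> 'a" and x0 :: 'a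
  assumes k_pos: "k > 0" and l_pos: "l > 0" and uniform: "uniform_cycles l S \<sigma>"
    and x0_in_S: "x0 \<in> S"
begin

lemma sigma_permutes: "\<sigma> permutes S" and finite_S: "finite S"
  and sigma_permutation: "permutation \<sigma>"
  using uniform uniform_cycles_permutation unfolding uniform_cycles_def by auto

lemma funpow_eq_iff: "x \<in> S \<Longrightarrow> (\<sigma> ^^ a) x = (\<sigma> ^^ b) x \<longleftrightarrow> a mod l = b mod l"
  using uniform_cycles_funpow_eq_iff[OF uniform _ l_pos] .

lemma orbit_union_subset:
  assumes "ys \<in> orbit_transversals S \<sigma> x0"
  shows "orbit_union \<sigma> ys \<subseteq> S"
  using orbit_transversalsD(2)[OF assms] permutes_orbit_subset[OF sigma_permutes]
  unfolding orbit_union_def by blast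

lemma card_orbit_union:
  assumes ys: "ys \<in> orbit_transversals S \<sigma> x0"
  shows "card (orbit_union \<sigma> ys) = l * length ys"
proof -
  have s: "set ys \<subseteq> S" and d: "distinct ys" using orbit_transversalsD[OF ys] by auto
  have d2: "distinct (map (orbit \<sigma>) ys)" using ys unfolding orbit_transversals_def by auto
  have "card (orbit_union \<sigma> ys) = (\<Sum>y\<in>set ys. card (orbit \<sigma> y))" unfolding orbit_union_def
  proof (rule card_UN_disjoint)
    show "\<forall>y\<in>set ys. finite (orbit \<sigma> y)"
      using s permutes_orbit_subset[OF sigma_permutes] finite_S by (meson finite_subset subsetD)
    show "\<forall>i\<in>set ys. \<forall>j\<in>set ys. i \<noteq> j \<longrightarrow> orbit \<sigma> i \<inter> orbit \<sigma> j = {}"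
    proof (intro ballI impI)
      fix i j assume "i \<in> set ys" "j \<in> set ys" "i \<noteq> j"
      then have "orbit \<sigma> i \<noteq> orbit \<sigma> j" using d2 by (auto simp: distinct_map inj_on_def)
      then show "orbit \<sigma> i \<inter> orbit \<sigma> j = {}"
        by (rule permutation_orbits_disjoint[OF sigma_permutation])
    qed
  qed simp
  also have "\<dots> = (\<Sum>y\<in>set ys. l)" using s uniform unfolding uniform_cycles_def by (intro sum.cong) auto
  also have "\<dots> = l * length ys" using d by (simp add: distinct_card)
  finally show ?thesis .
qed

lemma card_diff_orbit_union:
  assumes "ys \<in> orbit_transversals S \<sigma> x0" "card S = l * c"
  shows "card (S - orbit_union \<sigma> ys) = l * (c - length ys)"
  using assms card_orbit_union[OF assms(1)] orbit_union_subset[OF assms(1)] finite_S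
  by (simp add: card_Diff_subset finite_subset diff_mult_distrib2)

lemma length_transversal_le:
  assumes "ys \<in> orbit_transversals S \<sigma> x0" "card S = l * c"
  shows "length ys \<le> c"
  using card_orbit_union[OF assms(1)] card_mono[OF finite_S orbit_union_subset[OF assms(1)]]
    assms(2) l_pos by simp

context
  fixes ys assumes ys: "ys \<in> orbit_transversals S \<sigma> x0" and length_G: "length ys \<in> G_set k l"
begin

lemma length_pos: "length ys > 0" and length_dvd: "length ys dvd k"
  using length_G k_pos G_set_iff by auto

lemma nth_in_S: "i < length ys \<Longrightarrow> ys ! i \<in> S"
  using orbit_transversalsD(2)[OF ys] by auto

lemma orbit_cycle_point: "orbit \<sigma> (cycle_point k l \<sigma> ys i) = orbit \<sigma> (ys ! (i mod length ys))"
  unfolding cycle_point_def by (rule permutation_orbit_funpow[OF sigma_permutation])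

lemma cycle_point_in_orbit_union: "cycle_point k l \<sigma> ys i \<in> orbit_union \<sigma> ys"
  using length_pos
  by (simp add: in_orbit_union_iff[OF sigma_permutation] orbit_cycle_point)

lemma cycle_point_less: "i < length ys \<Longrightarrow> cycle_point k l \<sigma> ys i = ys ! i"
  unfolding cycle_point_def by simp

lemma cycle_point_0: "cycle_point k l \<sigma> ys 0 = x0"
  using cycle_point_less[of 0] length_pos orbit_transversalsD(3)[OF ys] by simp

lemma cycle_point_mod: "cycle_point k l \<sigma> ys (i mod (l * length ys)) = cycle_point k l \<sigma> ys i"
proof -
  let ?g = "length ys" and ?u = "quot_inverse k l (length ys)"
  have split: "i mod (?g * l) = ?g * ((i div ?g) mod l) + i mod ?g" by (simp add: mod_mult2_eq)
  then have "(i mod (?g * l)) mod ?g = i mod ?g" "(i mod (?g * l)) div ?g = (i div ?g) mod l"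
    using length_pos by simp_all
  moreover have "((i div ?g) mod l * ?u) mod l = (i div ?g * ?u) mod l" by (simp add: mod_mult_left_eq)
  ultimately show ?thesis unfolding cycle_point_def by (simp add: mult.commute)
qed

lemma sigma_cycle_point: "\<sigma> (cycle_point k l \<sigma> ys i) = cycle_point k l \<sigma> ys (i + k)"
proof -
  let ?g = "length ys" and ?u = "quot_inverse k l (length ys)"
  obtain k' where k': "k = ?g * k'" using length_dvd by blast
  have yS: "ys ! (i mod ?g) \<in> S" using nth_in_S length_pos by simp
  have d: "(i + k) div ?g = i div ?g + k'" "(i + k) mod ?g = i mod ?g" using length_pos k' by auto
  have "(k' * ?u) mod l = 1 mod l" using quot_inverse_mod[OF length_G k_pos] k' length_pos by simp
  then have e: "((i div ?g + k') * ?u) mod l = Suc (i div ?g * ?u) mod l"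
    by (metis add.commute add_mult_distrib mod_add_right_eq plus_1_eq_Suc)
  have "\<sigma> (cycle_point k l \<sigma> ys i) = (\<sigma> ^^ Suc (i div ?g * ?u mod l)) (ys ! (i mod ?g))"
    unfolding cycle_point_def by simp
  also have "\<dots> = (\<sigma> ^^ (((i div ?g + k') * ?u) mod l)) (ys ! (i mod ?g))"
    by (subst funpow_eq_iff[OF yS]) (simp add: e mod_Suc_eq)
  also have "\<dots> = cycle_point k l \<sigma> ys (i + k)" unfolding cycle_point_def d ..
  finally show ?thesis .
qed

lemma cycle_point_inj:
  assumes "i < l * length ys" "j < l * length ys"
    and "cycle_point k l \<sigma> ys i = cycle_point k l \<sigma> ys j"
  shows "i = j"
proof -
  let ?g = "length ys" and ?u = "quot_inverse k l (length ys)"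
  obtain k' where k': "k = ?g * k'" using length_dvd by blast
  have u: "(k' * ?u) mod l = 1 mod l" using quot_inverse_mod[OF length_G k_pos] k' length_pos by simp
  have im: "i mod ?g < ?g" "j mod ?g < ?g" using length_pos by auto
  have "orbit \<sigma> (ys ! (i mod ?g)) = orbit \<sigma> (ys ! (j mod ?g))"
    using orbit_cycle_point[of i] orbit_cycle_point[of j] assms(3) by simp
  then have mg: "i mod ?g = j mod ?g" using orbit_transversalsD(5)[OF ys im] by simp
  have "(i div ?g * ?u mod l) mod l = (j div ?g * ?u mod l) mod l"
    using assms(3) unfolding cycle_point_def mg funpow_eq_iff[OF nth_in_S[OF im(2)]] .
  then have "(i div ?g * ?u * k') mod l = (j div ?g * ?u * k') mod l" by (metis mod_mod_trivial mod_mult_left_eq)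
  moreover have "\<And>a. (a * ?u * k') mod l = a mod l"
    by (metis u mod_mult_right_eq mult.assoc mult.commute nat_mult_1_right)
  ultimately have "(i div ?g) mod l = (j div ?g) mod l" by metis
  moreover have "i div ?g < l" "j div ?g < l" using assms length_pos
    by (auto simp: less_mult_imp_div_less mult.commute)
  ultimately have "i div ?g = j div ?g" by simp
  then show ?thesis using mg by (metis div_mult_mod_eq)
qed

lemma length_root_cycle_list: "length (root_cycle_list k l \<sigma> ys) = l * length ys"
  unfolding root_cycle_list_def by simp

lemma nth_root_cycle_list:
  "i < l * length ys \<Longrightarrow> root_cycle_list k l \<sigma> ys ! i = cycle_point k l \<sigma> ys i"
  unfolding root_cycle_list_def by simp

lemma distinct_root_cycle_list: "distinct (root_cycle_list k l \<sigma> ys)"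
  unfolding root_cycle_list_def distinct_map using cycle_point_inj by (auto simp: inj_on_def)

lemma set_root_cycle_list: "set (root_cycle_list k l \<sigma> ys) = orbit_union \<sigma> ys"
proof -
  have "set (root_cycle_list k l \<sigma> ys) \<subseteq> orbit_union \<sigma> ys"
    unfolding root_cycle_list_def using cycle_point_in_orbit_union by auto
  moreover have "card (set (root_cycle_list k l \<sigma> ys)) = card (orbit_union \<sigma> ys)"
    using distinct_card[OF distinct_root_cycle_list] length_root_cycle_list card_orbit_union[OF ys]
    by simp
  moreover have "finite (orbit_union \<sigma> ys)"
    using orbit_union_subset[OF ys] finite_S finite_subset by blast
  ultimately show ?thesis using card_subset_eq by blast
qed

lemma orbit_union_cycle_point:
  assumes "z \<in> orbit_union \<sigma> ys"
  obtains i where "i < l * length ys" "z = cycle_point k l \<sigma> ys i"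
  using assms set_root_cycle_list length_root_cycle_list nth_root_cycle_list
  by (metis in_set_conv_nth)

lemma root_cycle_funpow:
  "(root_cycle k l \<sigma> ys ^^ n) (cycle_point k l \<sigma> ys i) = cycle_point k l \<sigma> ys (i + n)"
proof -
  let ?m = "l * length ys"
  have m: "i mod ?m < ?m" using l_pos length_pos by simp
  have "(root_cycle k l \<sigma> ys ^^ n) (cycle_point k l \<sigma> ys i)
      = (root_cycle k l \<sigma> ys ^^ n) (root_cycle_list k l \<sigma> ys ! (i mod ?m))"
    using cycle_point_mod[of i] nth_root_cycle_list[OF m] by simp
  also have "\<dots> = root_cycle_list k l \<sigma> ys ! ((i mod ?m + n) mod ?m)"
    unfolding root_cycle_def
    using cycle_of_list_funpow_nth[OF distinct_root_cycle_list] length_root_cycle_list m by simp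
  also have "\<dots> = cycle_point k l \<sigma> ys (i + n)"
    using nth_root_cycle_list cycle_point_mod[of "i + n"] l_pos length_pos
    by (simp add: mod_add_left_eq)
  finally show ?thesis .
qed

lemma root_cycle_permutes: "root_cycle k l \<sigma> ys permutes orbit_union \<sigma> ys"
  unfolding root_cycle_def using cycle_permutes set_root_cycle_list by metis

lemma root_cycle_outside: "z \<notin> orbit_union \<sigma> ys \<Longrightarrow> (root_cycle k l \<sigma> ys ^^ n) z = z"
  using permutes_not_in[OF permutes_funpow[OF root_cycle_permutes]] by blast

lemma root_cycle_funpow_k: "z \<in> orbit_union \<sigma> ys \<Longrightarrow> (root_cycle k l \<sigma> ys ^^ k) z = \<sigma> z"
  by (metis orbit_union_cycle_point root_cycle_funpow sigma_cycle_point)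

lemma sign_root_cycle: "sign (root_cycle k l \<sigma> ys) = (-1) ^ (l * length ys - 1)"
  unfolding root_cycle_def
  using sign_cycle_of_list[OF distinct_root_cycle_list] length_root_cycle_list by simp

lemma root_cycle_funpow_x0: "r < length ys \<Longrightarrow> (root_cycle k l \<sigma> ys ^^ r) x0 = ys ! r"
  using root_cycle_funpow[of r 0] cycle_point_0 cycle_point_less[of r] by simp

lemma root_cycle_funpow_length_x0: "(root_cycle k l \<sigma> ys ^^ length ys) x0 \<in> orbit \<sigma> x0"
proof -
  have "orbit \<sigma> ((root_cycle k l \<sigma> ys ^^ length ys) x0) = orbit \<sigma> x0"
    using root_cycle_funpow[of "length ys" 0] cycle_point_0 orbit_cycle_point[of "length ys"]
      orbit_transversalsD(3)[OF ys] by simp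
  then show ?thesis
    using permutation_self_in_orbit[OF sigma_permutation] by metis
qed

context
  fixes \<tau>' assumes \<tau>': "\<tau>' \<in> perm_roots k (S - orbit_union \<sigma> ys)
                               (perm_restrict \<sigma> (S - orbit_union \<sigma> ys))"
begin

lemma outer_root_permutes: "\<tau>' permutes (S - orbit_union \<sigma> ys)"
  and outer_root_funpow_k: "\<tau>' ^^ k = perm_restrict \<sigma> (S - orbit_union \<sigma> ys)"
  using \<tau>' unfolding perm_roots_def by auto

lemma root_cycle_comp_commute: "root_cycle k l \<sigma> ys \<circ> \<tau>' = \<tau>' \<circ> root_cycle k l \<sigma> ys"
proof
  fix z
  show "(root_cycle k l \<sigma> ys \<circ> \<tau>') z = (\<tau>' \<circ> root_cycle k l \<sigma> ys) z"
  proof (cases "z \<in> orbit_union \<sigma> ys")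
    case True
    then have "root_cycle k l \<sigma> ys z \<in> orbit_union \<sigma> ys"
      using permutes_in_image[OF root_cycle_permutes] by blast
    then show ?thesis using True permutes_not_in[OF outer_root_permutes] by simp
  next
    case False
    then have "\<tau>' z \<notin> orbit_union \<sigma> ys"
      using permutes_in_image[OF outer_root_permutes, of z] permutes_not_in[OF outer_root_permutes, of z]
      by (cases "z \<in> S") auto
    then show ?thesis using False root_cycle_outside[of _ 1] by simp
  qed
qed

lemma root_cycle_comp_in_perm_roots: "root_cycle k l \<sigma> ys \<circ> \<tau>' \<in> perm_roots k S \<sigma>"
proof -
  have "((root_cycle k l \<sigma> ys \<circ> \<tau>') ^^ k) z = \<sigma> z" for z
  proof -
    have "((root_cycle k l \<sigma> ys \<circ> \<tau>') ^^ k) z = (root_cycle k l \<sigma> ys ^^ k) ((\<tau>' ^^ k) z)"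
      using funpow_comp_commute[OF root_cycle_comp_commute, of k] by simp
    also have "\<dots> = \<sigma> z"
    proof (cases "z \<in> orbit_union \<sigma> ys")
      case True
      then show ?thesis using outer_root_funpow_k root_cycle_funpow_k by (simp add: perm_restrict_def)
    next
      case False
      then have "\<sigma> z \<notin> orbit_union \<sigma> ys"
        using orbit_union_funpow_iff[OF sigma_permutation, of 1] by simp
      then show ?thesis
        using outer_root_funpow_k False root_cycle_outside permutes_not_in[OF sigma_permutes]
        by (cases "z \<in> S") (simp_all add: perm_restrict_def)
    qed
    finally show ?thesis .
  qed
  moreover have "root_cycle k l \<sigma> ys \<circ> \<tau>' permutes S"
    using permutes_subset[OF outer_root_permutes] permutes_subset[OF root_cycle_permutes]
      orbit_union_subset[OF ys] by (blast intro: permutes_compose)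
  ultimately show ?thesis unfolding perm_roots_def by auto
qed

lemma sign_root_cycle_comp:
  "sign (root_cycle k l \<sigma> ys \<circ> \<tau>') = (-1) ^ (l * length ys - 1) * sign \<tau>'"
proof -
  have "permutation \<tau>'" using outer_root_permutes finite_S permutation_permutes by blast
  then show ?thesis
    using sign_compose[OF _ \<open>permutation \<tau>'\<close>] sign_root_cycle permutation_of_cycle
    unfolding root_cycle_def by metis
qed

lemma root_cycle_comp_funpow_x0:
  "((root_cycle k l \<sigma> ys \<circ> \<tau>') ^^ n) x0 = (root_cycle k l \<sigma> ys ^^ n) x0"
proof (induction n)
  case (Suc n)
  have "(root_cycle k l \<sigma> ys ^^ n) x0 \<in> orbit_union \<sigma> ys"
    using permutes_in_image[OF permutes_funpow[OF root_cycle_permutes]] cycle_point_0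
      cycle_point_in_orbit_union[of 0] by metis
  then show ?case using Suc permutes_not_in[OF outer_root_permutes] by simp
qed simp

lemma first_return_root_cycle_comp: "first_return \<sigma> x0 (root_cycle k l \<sigma> ys \<circ> \<tau>') = length ys"
  unfolding first_return_def
proof (rule Least_equality)
  show "0 < length ys \<and> ((root_cycle k l \<sigma> ys \<circ> \<tau>') ^^ length ys) x0 \<in> orbit \<sigma> x0"
    using length_pos root_cycle_comp_funpow_x0 root_cycle_funpow_length_x0 by simp
next
  fix y assume y: "0 < y \<and> ((root_cycle k l \<sigma> ys \<circ> \<tau>') ^^ y) x0 \<in> orbit \<sigma> x0"
  show "length ys \<le> y"
  proof (rule ccontr)
    assume "\<not> length ys \<le> y"
    then have y_less: "y < length ys" by simp
    have "ys ! y \<in> orbit \<sigma> x0" using y root_cycle_comp_funpow_x0 root_cycle_funpow_x0[OF y_less] by simp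
    then have "orbit \<sigma> (ys ! y) = orbit \<sigma> (ys ! 0)"
      using permutation_orbit_eq[OF sigma_permutation] orbit_transversalsD(3)[OF ys] by simp
    then have "y = 0" using orbit_transversalsD(5)[OF ys y_less length_pos] by simp
    then show False using y by simp
  qed
qed

lemma return_trace_root_cycle_comp: "return_trace \<sigma> x0 (root_cycle k l \<sigma> ys \<circ> \<tau>') = ys"
  by (rule nth_equalityI)
    (simp_all add: return_trace_def first_return_root_cycle_comp root_cycle_comp_funpow_x0
      root_cycle_funpow_x0)

lemma perm_restrict_root_cycle_comp:
  "perm_restrict (root_cycle k l \<sigma> ys \<circ> \<tau>') (S - orbit_union \<sigma> ys) = \<tau>'"
proof
  fix z
  show "perm_restrict (root_cycle k l \<sigma> ys \<circ> \<tau>') (S - orbit_union \<sigma> ys) z = \<tau>' z"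
  proof (cases "z \<in> S - orbit_union \<sigma> ys")
    case True
    then have "\<tau>' z \<in> S - orbit_union \<sigma> ys" using permutes_in_image[OF outer_root_permutes] by blast
    then show ?thesis using True root_cycle_outside[of "\<tau>' z" 1] by (simp add: perm_restrict_def)
  next
    case False
    then show ?thesis using permutes_not_in[OF outer_root_permutes False]
      by (auto simp: perm_restrict_def)
  qed
qed

end

end


section \<open>Decomposition of a root\<close>

context
  fixes \<tau> assumes \<tau>: "\<tau> \<in> perm_roots k S \<sigma>"
begin

lemma root_permutes: "\<tau> permutes S" and root_funpow_k: "\<tau> ^^ k = \<sigma>"
  using \<tau> unfolding perm_roots_def by auto

lemma root_funpow_commute: "(\<tau> ^^ a) ((\<sigma> ^^ b) z) = (\<sigma> ^^ b) ((\<tau> ^^ a) z)"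
proof -
  have "\<tau> \<circ> \<sigma> = \<sigma> \<circ> \<tau>" using root_funpow_k by (metis funpow.simps(2) funpow_Suc_right)
  then show ?thesis using funpow_commute[of \<tau> \<sigma> a b] by (metis comp_apply)
qed

lemma root_funpow_inj: "(\<tau> ^^ n) a = (\<tau> ^^ n) b \<Longrightarrow> a = b"
  using permutes_inj[OF permutes_funpow[OF root_permutes]] by (meson injD)

lemma first_return_exists: "\<exists>g. 0 < g \<and> (\<tau> ^^ g) x0 \<in> orbit \<sigma> x0"
  using k_pos root_funpow_k by (intro exI[of _ k]) (auto intro: orbit.base)

lemma first_return_pos: "0 < first_return \<sigma> x0 \<tau>"
  and first_return_in_orbit: "(\<tau> ^^ first_return \<sigma> x0 \<tau>) x0 \<in> orbit \<sigma> x0"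
  using LeastI_ex[OF first_return_exists] unfolding first_return_def by auto

lemma not_in_orbit_before_first_return:
  "0 < r \<Longrightarrow> r < first_return \<sigma> x0 \<tau> \<Longrightarrow> (\<tau> ^^ r) x0 \<notin> orbit \<sigma> x0"
  unfolding first_return_def using not_less_Least by blast

lemma funpow_diff_in_orbit:
  assumes "r \<le> s" "(\<tau> ^^ s) x0 \<in> orbit \<sigma> ((\<tau> ^^ r) x0)"
  shows "(\<tau> ^^ (s - r)) x0 \<in> orbit \<sigma> x0"
proof -
  note orbit_eq = orbit_altdef_permutation[OF sigma_permutation]
  obtain j where j: "(\<tau> ^^ s) x0 = (\<sigma> ^^ j) ((\<tau> ^^ r) x0)" using assms(2) orbit_eq by blast
  have "(\<tau> ^^ s) x0 = (\<tau> ^^ r) ((\<tau> ^^ (s - r)) x0)"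
    using assms(1) by (metis funpow_add le_add_diff_inverse comp_apply)
  then have "(\<tau> ^^ (s - r)) x0 = (\<sigma> ^^ j) x0" using j root_funpow_commute root_funpow_inj by metis
  then show ?thesis using orbit_eq by blast
qed

lemma length_return_trace: "length (return_trace \<sigma> x0 \<tau>) = first_return \<sigma> x0 \<tau>"
  unfolding return_trace_def by simp

lemma nth_return_trace: "r < first_return \<sigma> x0 \<tau> \<Longrightarrow> return_trace \<sigma> x0 \<tau> ! r = (\<tau> ^^ r) x0"
  unfolding return_trace_def by simp

lemma return_trace_in_transversals: "return_trace \<sigma> x0 \<tau> \<in> orbit_transversals S \<sigma> x0"
proof -
  let ?ys = "return_trace \<sigma> x0 \<tau>"
  have ne: "?ys \<noteq> []" using first_return_pos length_return_trace by force
  have "distinct (map (orbit \<sigma>) ?ys)"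
  proof (rule ccontr)
    assume "\<not> distinct (map (orbit \<sigma>) ?ys)"
    then obtain i j where "i < first_return \<sigma> x0 \<tau>" "j < first_return \<sigma> x0 \<tau>" "i \<noteq> j"
      "orbit \<sigma> ((\<tau> ^^ i) x0) = orbit \<sigma> ((\<tau> ^^ j) x0)"
      by (auto simp: distinct_conv_nth length_return_trace nth_return_trace)
    then obtain a b where ab: "a < b" "b < first_return \<sigma> x0 \<tau>"
      "orbit \<sigma> ((\<tau> ^^ a) x0) = orbit \<sigma> ((\<tau> ^^ b) x0)"
      by (metis linorder_neqE_nat)
    then have "(\<tau> ^^ b) x0 \<in> orbit \<sigma> ((\<tau> ^^ a) x0)"
      using permutation_self_in_orbit[OF sigma_permutation] by simp
    then have "(\<tau> ^^ (b - a)) x0 \<in> orbit \<sigma> x0" using funpow_diff_in_orbit ab(1) by simp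
    then show False using not_in_orbit_before_first_return[of "b - a"] ab by simp
  qed
  moreover have "hd ?ys = x0" using ne first_return_pos nth_return_trace[of 0] by (simp add: hd_conv_nth)
  moreover have "set ?ys \<subseteq> S"
    unfolding return_trace_def using permutes_in_funpow_image[OF root_permutes x0_in_S] by auto
  ultimately show ?thesis unfolding orbit_transversals_def using ne by simp
qed

lemma first_return_exponent:
  obtains v where "(\<tau> ^^ first_return \<sigma> x0 \<tau>) x0 = (\<sigma> ^^ v) x0"
    "first_return \<sigma> x0 \<tau> dvd k" "(k div first_return \<sigma> x0 \<tau> * v) mod l = 1 mod l"
proof -
  let ?g = "first_return \<sigma> x0 \<tau>"
  obtain v where v: "(\<tau> ^^ ?g) x0 = (\<sigma> ^^ v) x0"
    using first_return_in_orbit orbit_altdef_permutation[OF sigma_permutation] by blast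
  have multiple: "(\<tau> ^^ (?g * q)) x0 = (\<sigma> ^^ (v * q)) x0" for q
  proof (induction q)
    case (Suc q)
    have "(\<tau> ^^ (?g * Suc q)) x0 = (\<tau> ^^ ?g) ((\<tau> ^^ (?g * q)) x0)"
      by (simp add: funpow_add)
    also have "\<dots> = (\<sigma> ^^ (v * q)) ((\<sigma> ^^ v) x0)" using Suc v root_funpow_commute by simp
    also have "\<dots> = (\<sigma> ^^ (v * q + v)) x0" by (simp add: funpow_add)
    also have "\<dots> = (\<sigma> ^^ (v * Suc q)) x0" by (simp add: add.commute)
    finally show ?case .
  qed simp
  define q r where "q = k div ?g" and "r = k mod ?g"
  have "\<sigma> x0 = (\<tau> ^^ (r + ?g * q)) x0" unfolding q_def r_def using root_funpow_k by simp
  also have "\<dots> = (\<sigma> ^^ (v * q)) ((\<tau> ^^ r) x0)"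
    using multiple root_funpow_commute by (simp add: funpow_add)
  finally have k_step: "\<sigma> x0 = (\<sigma> ^^ (v * q)) ((\<tau> ^^ r) x0)" .
  have "orbit \<sigma> x0 = orbit \<sigma> ((\<tau> ^^ r) x0)"
    using permutation_orbit_funpow[OF sigma_permutation, of 1 x0]
      permutation_orbit_funpow[OF sigma_permutation, of "v * q" "(\<tau> ^^ r) x0"] k_step
    by simp
  then have "(\<tau> ^^ r) x0 \<in> orbit \<sigma> x0"
    using permutation_self_in_orbit[OF sigma_permutation] by simp
  moreover have "r < ?g" unfolding r_def using first_return_pos by simp
  ultimately have "r = 0" using not_in_orbit_before_first_return[of r] by (cases "r = 0") auto
  then have "?g dvd k" unfolding r_def by (rule mod_0_imp_dvd)
  moreover have "(\<sigma> ^^ (v * q)) x0 = (\<sigma> ^^ 1) x0" using k_step \<open>r = 0\<close> by simp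
  then have "(v * q) mod l = 1 mod l" using funpow_eq_iff[OF x0_in_S] by blast
  then have "(k div ?g * v) mod l = 1 mod l" unfolding q_def by (simp add: mult.commute)
  ultimately show ?thesis using that v by blast
qed

lemma first_return_in_G: "first_return \<sigma> x0 \<tau> \<in> G_set k l"
  using first_return_exponent first_return_pos coprime_if_mod_inverse G_set_iff[OF k_pos] by metis

lemma length_return_trace_in_G: "length (return_trace \<sigma> x0 \<tau>) \<in> G_set k l"
  using first_return_in_G length_return_trace by simp

lemma root_funpow_first_return:
  "(\<tau> ^^ first_return \<sigma> x0 \<tau>) x0 = (\<sigma> ^^ quot_inverse k l (first_return \<sigma> x0 \<tau>)) x0"
proof -
  obtain v where v: "(\<tau> ^^ first_return \<sigma> x0 \<tau>) x0 = (\<sigma> ^^ v) x0"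
    "(k div first_return \<sigma> x0 \<tau> * v) mod l = 1 mod l"
    using first_return_exponent by metis
  have "quot_inverse k l (first_return \<sigma> x0 \<tau>) mod l = v mod l"
    using mod_inverse_unique[OF quot_inverse_mod[OF first_return_in_G k_pos] v(2)] .
  then show ?thesis using v(1) funpow_eq_iff[OF x0_in_S] by simp
qed

lemma root_eq_root_cycle:
  assumes "z \<in> orbit_union \<sigma> (return_trace \<sigma> x0 \<tau>)"
  shows "\<tau> z = root_cycle k l \<sigma> (return_trace \<sigma> x0 \<tau>) z"
proof -
  let ?ys = "return_trace \<sigma> x0 \<tau>" and ?g = "first_return \<sigma> x0 \<tau>"
  let ?u = "quot_inverse k l ?g"
  note trace = return_trace_in_transversals length_return_trace_in_G
  obtain i where i: "z = cycle_point k l \<sigma> ?ys i"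
    using orbit_union_cycle_point[OF trace assms] by blast
  define r a where "r = i mod ?g" and "a = i div ?g * ?u mod l"
  have r_less: "r < ?g" unfolding r_def using first_return_pos by simp
  have "z = (\<sigma> ^^ a) ((\<tau> ^^ r) x0)"
    unfolding i cycle_point_def a_def r_def length_return_trace
    using nth_return_trace first_return_pos by simp
  then have \<tau>_z: "\<tau> z = (\<sigma> ^^ a) ((\<tau> ^^ Suc r) x0)" using root_funpow_commute[of 1 a] by simp
  have cycle_z: "root_cycle k l \<sigma> ?ys z = cycle_point k l \<sigma> ?ys (i + 1)"
    unfolding i using root_cycle_funpow[OF trace, of 1 i] by simp
  show ?thesis
  proof (cases "Suc r < ?g")
    case True
    then have "(i + 1) mod ?g = Suc r" "(i + 1) div ?g = i div ?g"
      unfolding r_def by (simp_all add: mod_Suc div_Suc)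
    then have "cycle_point k l \<sigma> ?ys (i + 1) = (\<sigma> ^^ a) (?ys ! Suc r)"
      unfolding cycle_point_def a_def length_return_trace by simp
    then show ?thesis using \<tau>_z cycle_z nth_return_trace[OF True] by simp
  next
    case False
    then have "Suc r = ?g" using r_less by simp
    then have "(i + 1) mod ?g = 0" "(i + 1) div ?g = Suc (i div ?g)"
      unfolding r_def by (simp_all add: mod_Suc div_Suc)
    then have "cycle_point k l \<sigma> ?ys (i + 1) = (\<sigma> ^^ (Suc (i div ?g) * ?u mod l)) x0"
      unfolding cycle_point_def length_return_trace using nth_return_trace[OF first_return_pos] by simp
    moreover have "\<tau> z = (\<sigma> ^^ (a + ?u)) x0"
      using \<tau>_z \<open>Suc r = ?g\<close> root_funpow_first_return by (simp add: funpow_add)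
    moreover have "(a + ?u) mod l = (Suc (i div ?g) * ?u mod l) mod l"
      unfolding a_def by (simp add: mod_simps algebra_simps)
    ultimately show ?thesis using cycle_z funpow_eq_iff[OF x0_in_S] by simp
  qed
qed

lemma root_image_orbit_union:
  "\<tau> ` orbit_union \<sigma> (return_trace \<sigma> x0 \<tau>) = orbit_union \<sigma> (return_trace \<sigma> x0 \<tau>)"
proof -
  let ?C = "orbit_union \<sigma> (return_trace \<sigma> x0 \<tau>)"
  have "\<tau> ` ?C = root_cycle k l \<sigma> (return_trace \<sigma> x0 \<tau>) ` ?C"
    using root_eq_root_cycle by (auto simp: image_def)
  also have "\<dots> = ?C"
    using permutes_image[OF root_cycle_permutes[OF return_trace_in_transversals length_return_trace_in_G]] .
  finally show ?thesis .
qed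

lemmas root_perm_restrict = perm_restrict_diff_invariant[OF root_permutes
  orbit_union_subset[OF return_trace_in_transversals] root_image_orbit_union]

lemma root_decompose:
  "\<tau> = root_cycle k l \<sigma> (return_trace \<sigma> x0 \<tau>)
        \<circ> perm_restrict \<tau> (S - orbit_union \<sigma> (return_trace \<sigma> x0 \<tau>))"
proof
  fix z
  let ?ys = "return_trace \<sigma> x0 \<tau>"
  note outside = root_cycle_outside[OF return_trace_in_transversals length_return_trace_in_G]
  show "\<tau> z = (root_cycle k l \<sigma> ?ys \<circ> perm_restrict \<tau> (S - orbit_union \<sigma> ?ys)) z"
  proof (cases "z \<in> S - orbit_union \<sigma> ?ys")
    case True
    then show ?thesis using root_perm_restrict(3) outside[of "\<tau> z" 1] by (simp add: perm_restrict_def)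
  next
    case False
    show ?thesis
    proof (cases "z \<in> orbit_union \<sigma> ?ys")
      case True
      then show ?thesis using root_eq_root_cycle by (simp add: perm_restrict_def)
    next
      case outside_union: False
      then have "z \<notin> S" using False by blast
      then show ?thesis using outside_union outside[of z 1] permutes_not_in[OF root_permutes]
        by (simp add: perm_restrict_def)
    qed
  qed
qed

lemma perm_restrict_root_in_perm_roots:
  "perm_restrict \<tau> (S - orbit_union \<sigma> (return_trace \<sigma> x0 \<tau>))
     \<in> perm_roots k (S - orbit_union \<sigma> (return_trace \<sigma> x0 \<tau>))
          (perm_restrict \<sigma> (S - orbit_union \<sigma> (return_trace \<sigma> x0 \<tau>)))"
proof -
  let ?A = "S - orbit_union \<sigma> (return_trace \<sigma> x0 \<tau>)"
  have "(perm_restrict \<tau> ?A ^^ k) z = perm_restrict \<sigma> ?A z" for z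
  proof (cases "z \<in> ?A")
    case True
    then show ?thesis using root_perm_restrict(2)[OF True, of k] root_funpow_k
      by (simp add: perm_restrict_def)
  next
    case False
    then show ?thesis using permutes_not_in[OF permutes_funpow[OF root_perm_restrict(1)] False, of k]
      by (auto simp: perm_restrict_def)
  qed
  then show ?thesis unfolding perm_roots_def using root_perm_restrict(1) by auto
qed

end

section \<open>Counting signed roots\<close>

abbreviation complement_roots :: "'a list \<Rightarrow> ('a \<Rightarrow> 'a) set" where
  "complement_roots ys \<equiv> perm_roots k (S - orbit_union \<sigma> ys) (perm_restrict \<sigma> (S - orbit_union \<sigma> ys))"

lemma perm_roots_bij:
  "bij_betw (\<lambda>(ys, \<tau>'). root_cycle k l \<sigma> ys \<circ> \<tau>')
     (SIGMA ys:{ys \<in> orbit_transversals S \<sigma> x0. length ys \<in> G_set k l}. complement_roots ys)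
     (perm_roots k S \<sigma>)"
  by (rule bij_betw_byWitness[where
      f' = "\<lambda>\<tau>. (return_trace \<sigma> x0 \<tau>, perm_restrict \<tau> (S - orbit_union \<sigma> (return_trace \<sigma> x0 \<tau>)))"])
    (use return_trace_root_cycle_comp perm_restrict_root_cycle_comp root_decompose[symmetric]
      root_cycle_comp_in_perm_roots return_trace_in_transversals length_return_trace_in_G
      perm_restrict_root_in_perm_roots in auto)

lemma finite_orbit_transversals: "finite (orbit_transversals S \<sigma> x0)"
proof -
  have "orbit_transversals S \<sigma> x0 \<subseteq> {xs. set xs \<subseteq> S \<and> length xs \<le> card S}"
  proof
    fix ys assume ys: "ys \<in> orbit_transversals S \<sigma> x0"
    have "length ys = card (set ys)" using orbit_transversalsD(1)[OF ys] by (simp add: distinct_card)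
    also have "\<dots> \<le> card S" using orbit_transversalsD(2)[OF ys] finite_S by (simp add: card_mono)
    finally show "ys \<in> {xs. set xs \<subseteq> S \<and> length xs \<le> card S}"
      using orbit_transversalsD(2)[OF ys] by simp
  qed
  then show ?thesis using finite_lists_length_le[OF finite_S] finite_subset by blast
qed

lemma sum_sign_perm_roots_decompose:
  "(\<Sum>\<tau>\<in>perm_roots k S \<sigma>. real_of_int (sign \<tau>)) =
   (\<Sum>ys\<in>{ys \<in> orbit_transversals S \<sigma> x0. length ys \<in> G_set k l}.
      (-1) ^ (l * length ys - 1) * (\<Sum>\<tau>'\<in>complement_roots ys. real_of_int (sign \<tau>')))"
proof -
  let ?T = "{ys \<in> orbit_transversals S \<sigma> x0. length ys \<in> G_set k l}"
  have "(\<Sum>\<tau>\<in>perm_roots k S \<sigma>. real_of_int (sign \<tau>)) =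
        (\<Sum>(ys, \<tau>')\<in>(SIGMA ys:?T. complement_roots ys). real_of_int (sign (root_cycle k l \<sigma> ys \<circ> \<tau>')))"
    using sum.reindex_bij_betw[OF perm_roots_bij, of "\<lambda>\<tau>. real_of_int (sign \<tau>)"]
    by (simp add: case_prod_beta')
  also have "\<dots> = (\<Sum>ys\<in>?T. \<Sum>\<tau>'\<in>complement_roots ys. real_of_int (sign (root_cycle k l \<sigma> ys \<circ> \<tau>')))"
  proof (rule sum.Sigma[symmetric])
    show "finite ?T" using finite_orbit_transversals by simp
    show "\<forall>ys\<in>?T. finite (complement_roots ys)"
      unfolding perm_roots_def using finite_S
      by (auto intro: finite_subset[OF _ finite_permutations[of "S - orbit_union \<sigma> _"]])
  qed
  also have "\<dots> = (\<Sum>ys\<in>?T. (-1) ^ (l * length ys - 1) * (\<Sum>\<tau>'\<in>complement_roots ys. real_of_int (sign \<tau>')))"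
    by (simp add: sign_root_cycle_comp sum_distrib_left)
  finally show ?thesis .
qed

lemma orbit_transversals_length_1: "{ys \<in> orbit_transversals S \<sigma> x0. length ys = 1} = {[x0]}"
  unfolding orbit_transversals_def using x0_in_S by (auto simp: length_Suc_conv)

lemma orbit_transversals_length_Suc:
  "{ys \<in> orbit_transversals S \<sigma> x0. length ys = Suc (Suc j)}
     = (\<lambda>(ys, z). ys @ [z]) ` (SIGMA ys:{ys \<in> orbit_transversals S \<sigma> x0. length ys = Suc j}.
                                  S - orbit_union \<sigma> ys)"
proof -
  have "z \<notin> orbit_union \<sigma> ys \<longleftrightarrow> orbit \<sigma> z \<notin> set (map (orbit \<sigma>) ys)" for z ys
    using in_orbit_union_iff[OF sigma_permutation] by simp
  then have snoc: "ys @ [z] \<in> orbit_transversals S \<sigma> x0 \<longleftrightarrow>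
      ys \<in> orbit_transversals S \<sigma> x0 \<and> z \<in> S - orbit_union \<sigma> ys" if "ys \<noteq> []" for ys z
    using that unfolding orbit_transversals_def by auto
  show ?thesis
  proof (intro set_eqI iffI)
    fix ws assume ws: "ws \<in> {ys \<in> orbit_transversals S \<sigma> x0. length ys = Suc (Suc j)}"
    then obtain ys z where ws_eq: "ws = ys @ [z]" and "length ys = Suc j"
      by (metis (mono_tags, lifting) length_Suc_conv_rev mem_Collect_eq)
    then show "ws \<in> (\<lambda>(ys, z). ys @ [z]) ` (SIGMA ys:{ys \<in> orbit_transversals S \<sigma> x0. length ys = Suc j}.
                                  S - orbit_union \<sigma> ys)"
      using ws snoc[of ys z] by force
  next
    fix ws assume "ws \<in> (\<lambda>(ys, z). ys @ [z]) ` (SIGMA ys:{ys \<in> orbit_transversals S \<sigma> x0. length ys = Suc j}.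
                                  S - orbit_union \<sigma> ys)"
    then obtain ys z where "ws = ys @ [z]" "length ys = Suc j" "ys \<in> orbit_transversals S \<sigma> x0"
      "z \<in> S - orbit_union \<sigma> ys" by auto
    then show "ws \<in> {ys \<in> orbit_transversals S \<sigma> x0. length ys = Suc (Suc j)}"
      using snoc[of ys z] by (cases ys) auto
  qed
qed

lemma card_orbit_transversals_length:
  assumes card_S: "card S = l * c" and "Suc j \<le> c"
  shows "card {ys \<in> orbit_transversals S \<sigma> x0. length ys = Suc j} * fact (c - Suc j)
       = l ^ j * fact (c - 1)"
  using assms(2)
proof (induction j)
  case 0
  then show ?case using orbit_transversals_length_1 by simp
next
  case (Suc j)
  let ?T = "{ys \<in> orbit_transversals S \<sigma> x0. length ys = Suc j}"
  have "card {ys \<in> orbit_transversals S \<sigma> x0. length ys = Suc (Suc j)}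
      = card (SIGMA ys:?T. S - orbit_union \<sigma> ys)"
    unfolding orbit_transversals_length_Suc by (rule card_image) (auto simp: inj_on_def)
  also have "\<dots> = (\<Sum>ys\<in>?T. card (S - orbit_union \<sigma> ys))"
    using finite_orbit_transversals finite_S by (simp add: card_SigmaI)
  also have "\<dots> = (\<Sum>ys\<in>?T. l * (c - Suc j))"
    by (rule sum.cong) (simp_all add: card_diff_orbit_union[OF _ card_S])
  also have "\<dots> = card ?T * (l * (c - Suc j))" by simp
  finally have step: "card {ys \<in> orbit_transversals S \<sigma> x0. length ys = Suc (Suc j)}
      = card ?T * (l * (c - Suc j))" .
  have "c - Suc j = Suc (c - Suc (Suc j))" using Suc.prems by simp
  then have "(fact (c - Suc j) :: nat) = (c - Suc j) * fact (c - Suc (Suc j))"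
    by (metis fact_Suc of_nat_id)
  then have "card {ys \<in> orbit_transversals S \<sigma> x0. length ys = Suc (Suc j)} * fact (c - Suc (Suc j))
      = l * (card ?T * fact (c - Suc j))"
    unfolding step by (simp only: ac_simps)
  also have "\<dots> = l ^ Suc j * fact (c - 1)" using Suc by simp
  finally show ?case .
qed

lemma signed_card_transversals_length:
  assumes card_S: "card S = l * c" and g: "g \<in> {1..c}"
  shows "real (card {ys \<in> orbit_transversals S \<sigma> x0. length ys \<in> G_set k l \<and> length ys = g})
           * ((-1) ^ (l * g - 1) * fact (c - g))
       = fact (c - 1) * (of_nat g * root_exponent k l $ g)"
proof (cases "g \<in> G_set k l")
  case True
  have "{ys \<in> orbit_transversals S \<sigma> x0. length ys \<in> G_set k l \<and> length ys = g}
      = {ys \<in> orbit_transversals S \<sigma> x0. length ys = Suc (g - 1)}"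
    using g True by auto
  moreover have "real (card {ys \<in> orbit_transversals S \<sigma> x0. length ys = Suc (g - 1)}) * fact (c - g)
      = real l ^ (g - 1) * fact (c - 1)"
    using arg_cong[OF card_orbit_transversals_length[OF card_S, of "g - 1"], of real] g by simp
  moreover obtain d where "l * g = Suc d" using l_pos g gr0_implies_Suc by force
  ultimately show ?thesis using True g by (simp add: of_nat_mult_root_exponent_nth algebra_simps)
next
  case False
  then have "{ys \<in> orbit_transversals S \<sigma> x0. length ys \<in> G_set k l \<and> length ys = g} = {}" by auto
  then show ?thesis using False g by (simp only: card.empty) (simp add: of_nat_mult_root_exponent_nth)
qed

lemma sum_sign_perm_roots_rec:
  assumes card_S: "card S = l * c"
    and complement: "\<And>ys. ys \<in> orbit_transversals S \<sigma> x0 \<Longrightarrow> length ys \<in> G_set k l \<Longrightarrow>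
      (\<Sum>\<tau>'\<in>complement_roots ys. real_of_int (sign \<tau>')) = fact (c - length ys) * h (c - length ys)"
  shows "(\<Sum>\<tau>\<in>perm_roots k S \<sigma>. real_of_int (sign \<tau>))
       = fact (c - 1) * (\<Sum>g=1..c. of_nat g * root_exponent k l $ g * h (c - g))"
proof -
  let ?T = "{ys \<in> orbit_transversals S \<sigma> x0. length ys \<in> G_set k l}"
  define H where "H g = (-1) ^ (l * g - 1) * fact (c - g) * h (c - g)" for g
  have length_range: "length ys \<in> {1..c}" if "ys \<in> ?T" for ys
  proof -
    have "length ys \<le> c" "0 < length ys"
      using that length_transversal_le[OF _ card_S, of ys] orbit_transversalsD(4)[of ys S \<sigma> x0]
      by auto
    then show ?thesis by (simp add: Suc_le_eq)
  qed
  have "(\<Sum>\<tau>\<in>perm_roots k S \<sigma>. real_of_int (sign \<tau>)) = (\<Sum>ys\<in>?T. H (length ys))"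
    unfolding sum_sign_perm_roots_decompose H_def by (auto intro!: sum.cong simp: complement)
  also have "\<dots> = (\<Sum>g\<in>{1..c}. \<Sum>ys\<in>{ys \<in> ?T. length ys = g}. H (length ys))"
    by (rule sum.group[symmetric]) (use finite_orbit_transversals length_range in auto)
  also have "\<dots> = (\<Sum>g=1..c. fact (c - 1) * (of_nat g * root_exponent k l $ g * h (c - g)))"
  proof (intro sum.cong refl)
    fix g assume g: "g \<in> {1..c}"
    have "{ys \<in> ?T. length ys = g}
        = {ys \<in> orbit_transversals S \<sigma> x0. length ys \<in> G_set k l \<and> length ys = g}" by auto
    then have "(\<Sum>ys\<in>{ys \<in> ?T. length ys = g}. H (length ys))
        = real (card {ys \<in> orbit_transversals S \<sigma> x0. length ys \<in> G_set k l \<and> length ys = g})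
            * ((-1) ^ (l * g - 1) * fact (c - g)) * h (c - g)"
      unfolding H_def by (simp add: ac_simps)
    also have "\<dots> = fact (c - 1) * (of_nat g * root_exponent k l $ g) * h (c - g)"
      by (simp only: signed_card_transversals_length[OF card_S g])
    finally show "(\<Sum>ys\<in>{ys \<in> ?T. length ys = g}. H (length ys))
        = fact (c - 1) * (of_nat g * root_exponent k l $ g * h (c - g))"
      by (simp only: mult.assoc)
  qed
  also have "\<dots> = fact (c - 1) * (\<Sum>g=1..c. of_nat g * root_exponent k l $ g * h (c - g))"
    by (simp add: sum_distrib_left)
  finally show ?thesis .
qed

end

theorem sum_sign_perm_roots:
  assumes "k > 0" "l > 0" "uniform_cycles l S \<sigma>" "card S = l * c"
  shows "(\<Sum>\<tau>\<in>perm_roots k S \<sigma>. real_of_int (sign \<tau>)) = fact c * (fps_exp 1 oo root_exponent k l) $ c"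
  using assms(3,4)
proof (induction c arbitrary: S \<sigma> rule: less_induct)
  case (less c)
  have finite: "finite S" using less.prems(1) unfolding uniform_cycles_def by simp
  show ?case
  proof (cases "c = 0")
    case True
    then have "S = {}" using less.prems(2) finite by simp
    then have "perm_roots k S \<sigma> = {id}"
      using less.prems(1) unfolding perm_roots_def uniform_cycles_def by auto
    then show ?thesis using True by simp
  next
    case False
    then obtain n where c: "c = Suc n" by (cases c) auto
    obtain x0 where "x0 \<in> S" using less.prems(2) False assms(2) by fastforce
    interpret root_setup k l S \<sigma> x0 using assms(1,2) less.prems(1) \<open>x0 \<in> S\<close> by unfold_locales
    define E where "E = fps_exp (1::real) oo root_exponent k l"
    have "(\<Sum>\<tau>\<in>perm_roots k S \<sigma>. real_of_int (sign \<tau>))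
        = fact (c - 1) * (\<Sum>g=1..c. of_nat g * root_exponent k l $ g * E $ (c - g))"
    proof (rule sum_sign_perm_roots_rec[OF less.prems(2)])
      fix ys assume ys: "ys \<in> orbit_transversals S \<sigma> x0" "length ys \<in> G_set k l"
      have "c - length ys < c" using orbit_transversalsD(4)[OF ys(1)] False by simp
      moreover note uniform_cycles_restrict[OF uniform orbit_union_subset[OF ys(1)]
          permutation_image_orbit_union[OF sigma_permutation]]
      moreover note card_diff_orbit_union[OF ys(1) less.prems(2)]
      ultimately show "(\<Sum>\<tau>'\<in>complement_roots ys. real_of_int (sign \<tau>'))
          = fact (c - length ys) * E $ (c - length ys)"
        unfolding E_def by (rule less.IH)
    qed
    also have "\<dots> = fact n * (of_nat (Suc n) * E $ Suc n)"
      unfolding c E_def using fps_exp_compose_nth_Suc[OF root_exponent_nth_0[OF assms(1)]] by simp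
    also have "\<dots> = fact c * E $ c" unfolding c by (simp add: algebra_simps)
    finally show ?thesis unfolding E_def .
  qed
qed

lemma re_roots_minus_ro_roots:
  assumes "finite S"
  shows "real (re_roots k S \<sigma>) - real (ro_roots k S \<sigma>) = (\<Sum>\<tau>\<in>perm_roots k S \<sigma>. real_of_int (sign \<tau>))"
proof -
  let ?even = "{\<tau>. \<tau> permutes S \<and> \<tau> ^^ k = \<sigma> \<and> evenperm \<tau>}"
  let ?odd = "{\<tau>. \<tau> permutes S \<and> \<tau> ^^ k = \<sigma> \<and> \<not> evenperm \<tau>}"
  have split: "perm_roots k S \<sigma> = ?even \<union> ?odd" unfolding perm_roots_def by auto
  have "finite (perm_roots k S \<sigma>)" unfolding perm_roots_def
    by (rule finite_subset[OF _ finite_permutations[OF assms]]) auto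
  then have "(\<Sum>\<tau>\<in>perm_roots k S \<sigma>. real_of_int (sign \<tau>))
      = (\<Sum>\<tau>\<in>?even. real_of_int (sign \<tau>)) + (\<Sum>\<tau>\<in>?odd. real_of_int (sign \<tau>))"
    unfolding split by (intro sum.union_disjoint) auto
  also have "\<dots> = real (card ?even) - real (card ?odd)" by (simp add: sign_def)
  finally show ?thesis unfolding re_roots_def ro_roots_def by simp
qed

theorem lemma2:
  fixes k l :: nat and \<sigma> :: "nat \<Rightarrow> nat \<Rightarrow> nat"
  assumes "k > 0" and "l > 0"
    and "\<And>c. has_cycle_type l c {0..<l * c} (\<sigma> c)"
  shows "Abs_fps (\<lambda>c. (of_nat (re_roots k {0..<l * c} (\<sigma> c))
                        - of_nat (ro_roots k {0..<l * c} (\<sigma> c))) / fact c)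
       = fps_exp (1::real) oo
         Abs_fps (\<lambda>g. if g \<in> G_set k l
                       then (-1) ^ (l * g + 1) * of_nat l ^ (g - 1) / of_nat g else 0)"
proof -
  have "real (re_roots k {0..<l * c} (\<sigma> c)) - real (ro_roots k {0..<l * c} (\<sigma> c))
      = fact c * (fps_exp 1 oo root_exponent k l) $ c" for c
  proof -
    have cycles: "uniform_cycles l {0..<l * c} (\<sigma> c)" "card {0..<l * c} = l * c"
      using assms(3)[of c] has_cycle_type_iff by auto
    show ?thesis
      using re_roots_minus_ro_roots[of "{0..<l * c}"] sum_sign_perm_roots[OF assms(1,2) cycles] by simp
  qed
  then show ?thesis unfolding root_exponent_def[symmetric] by (intro fps_ext) simp
qed

end
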